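(* Let $k$ be an odd positive integer and $m$ a positive integer. Then: (1) every integer of the form $p_1^{2^{m+1}k-1}$ with $p_1$ prime is $2^mk$-$T_0T^\ast$-perfect; (2) if $k>1$ and there exist integers $d_1,\dots,d_{m+2}>1$ with $d_1\cdots d_{m+2}=k$ (a multiplicative partition of $k$) such that $d_i\equiv 1\pmod{2^{m+1}}$ for all $i$, then every integer of the form $p_1^{(d_1-1)/2^{m+1}}\cdots p_{m+2}^{(d_{m+2}-1)/2^{m+1}}$ with distinct primes $p_1,\dots,p_{m+2}$ is $2^mk$-$T_0T^\ast$-perfect; (3) every $2^mk$-$T_0T^\ast$-perfect number $n>1$ is either of the form $p_1^{2^{m+1}k-1}$ with $p_1$ prime, or of the form $p_1^{(d_1-1)/2^{m+1}}\cdots p_{m+2}^{(d_{m+2}-1)/2^{m+1}}$ with distinct primes $p_i$ and integers $d_1,\dots,d_{m+2}>1$ as in (2).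
   Context: For a positive integer $m'$, $T(m')$ denotes the product of all positive divisors of $m'$, and $T^\ast(m')$ the product of all unitary divisors of $m'$ (divisors $d$ with $\gcd(d,m'/d)=1$). For an integer $K\ge 2$, an integer $n>1$ is called $K$-$T_0T^\ast$-perfect if $T(T^\ast(n))=n^K$. A multiplicative partition of an integer $N>1$ is an unordered factorization of $N$ as a product of integers in $\{1,\dots,N\}$. *)

theory Defs
  imports "HOL-Computational_Algebra.Primes" "HOL-Number_Theory.Cong"
begin

definition divprod :: "nat \<Rightarrow> nat" where
  "divprod m = (\<Prod>d\<in>{d. d dvd m}. d)"

definition udivprod :: "nat \<Rightarrow> nat" where
  "udivprod m = (\<Prod>d\<in>{d. d dvd m \<and> coprime d (m div d)}. d)"

definition K_T0Tstar_perfect :: "nat \<Rightarrow> nat \<Rightarrow> bool" where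
  "K_T0Tstar_perfect K n \<longleftrightarrow> 2 \<le> K \<and> 1 < n \<and> divprod (udivprod n) = n ^ K"

end

theory Submission
  imports Defs
begin

text \<open>
  Write \<open>n = p\<^sub>1\<^bsup>a\<^sub>1\<^esup> \<cdots> p\<^sub>s\<^bsup>a\<^sub>s\<^esup>\<close>. Divisors pair up as \<open>d \<leftrightarrow> n/d\<close>, so the product of any
  set of divisors closed under this pairing is \<open>n\<close> raised to half its size. There are
  \<open>2\<^sup>s\<close> unitary divisors, so \<open>T\<^sup>*(n) = n\<^bsup>2\<^sup>s\<^sup>-\<^sup>1\<^esup>\<close>, and this number has
  \<open>\<Prod>(2\<^bsup>s-1\<^esup>a\<^sub>i + 1)\<close> divisors. Hence \<open>T(T\<^sup>*(n)) = n\<^sup>K\<close> exactly when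
  \<open>2\<^bsup>s-1\<^esup> \<Prod>(2\<^bsup>s-1\<^esup>a\<^sub>i + 1) = 2K\<close>. For \<open>s = 1\<close> this says \<open>a\<^sub>1 = 2K - 1\<close>; for
  \<open>s \<ge> 2\<close> the product is odd, so comparing 2-adic valuations with \<open>2K = 2\<^bsup>m+1\<^esup>k\<close> forces
  \<open>s = m + 2\<close> and \<open>\<Prod>(2\<^bsup>m+1\<^esup>a\<^sub>i + 1) = k\<close>.
\<close>

definition divisors :: "nat \<Rightarrow> nat set" where
  "divisors n = {d. d dvd n}"

definition unitary_divisors :: "nat \<Rightarrow> nat set" where
  "unitary_divisors n = {d. d dvd n \<and> coprime d (n div d)}"

lemma prod_complementary_divisors_squared:
  assumes "finite S" "0 < (n::nat)" "\<And>d. d \<in> S \<Longrightarrow> d dvd n" "\<And>d. d \<in> S \<Longrightarrow> n div d \<in> S"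
  shows "(\<Prod>S)^2 = n ^ card S"
proof -
  have inv: "n div (n div d) = d" if "d \<in> S" for d
    using assms(2) assms(3)[OF that] by (simp add: div_div_eq_right)
  have "(\<Prod>d\<in>S. d) = (\<Prod>d\<in>S. n div d)"
    by (rule prod.reindex_bij_witness[of S "\<lambda>d. n div d" "\<lambda>d. n div d"]) (use inv assms(4) in auto)
  then have "(\<Prod>S)^2 = (\<Prod>d\<in>S. d * (n div d))" by (simp add: power2_eq_square prod.distrib)
  also have "\<dots> = (\<Prod>d\<in>S. n)" using assms(3) by (intro prod.cong) auto
  finally show ?thesis by simp
qed

lemma divprod_squared: "0 < n \<Longrightarrow> divprod n ^ 2 = n ^ card (divisors n)"
  unfolding divprod_def divisors_def
  by (rule prod_complementary_divisors_squared) (auto simp: div_dvd_div[of _ n n, symmetric])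

lemma udivprod_squared: "0 < n \<Longrightarrow> udivprod n ^ 2 = n ^ card (unitary_divisors n)"
  unfolding udivprod_def unitary_divisors_def
  by (rule prod_complementary_divisors_squared) (auto simp: coprime_commute div_div_eq_right)

lemma gcd_mult_dvd_coprime:
  assumes "coprime (a::nat) b" "x dvd a" "y dvd b"
  shows "gcd (x * y) a = x"
proof -
  have "coprime a y" using coprime_divisors[OF dvd_refl assms(3) assms(1)] .
  then show ?thesis using assms(2) by (simp add: gcd_mult_left_right_cancel gcd_nat.absorb1)
qed

lemma inj_on_mult_divisors:
  assumes "coprime (a::nat) b"
  shows "inj_on (\<lambda>(x, y). x * y) (divisors a \<times> divisors b)"
proof (rule inj_onI, clarsimp simp: divisors_def)
  fix x y x' y' assume xy: "x dvd a" "y dvd b" "x' dvd a" "y' dvd b" "x * y = x' * y'"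
  have ba: "coprime b a" using assms by (simp add: coprime_commute)
  have "x = x'"
    using gcd_mult_dvd_coprime[OF assms xy(1,2)] gcd_mult_dvd_coprime[OF assms xy(3,4)] xy(5)
    by simp
  moreover have "y = y'"
    using gcd_mult_dvd_coprime[OF ba xy(2,1)] gcd_mult_dvd_coprime[OF ba xy(4,3)] xy(5)
    by (simp add: mult.commute)
  ultimately show "x = x' \<and> y = y'" ..
qed

lemma divisors_mult:
  assumes "coprime (a::nat) b"
  shows "divisors (a * b) = (\<lambda>(x, y). x * y) ` (divisors a \<times> divisors b)"
proof (intro equalityI subsetI)
  fix z assume "z \<in> divisors (a * b)"
  then obtain x y where "z = x * y" "x dvd a" "y dvd b"
    using division_decomp[of z a b] by (auto simp: divisors_def)
  then show "z \<in> (\<lambda>(x, y). x * y) ` (divisors a \<times> divisors b)"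
    by (intro image_eqI[of _ _ "(x, y)"]) (simp_all add: divisors_def)
qed (auto simp: divisors_def mult_dvd_mono)

lemma coprime_mult_div_mult_iff:
  assumes "coprime (a::nat) b" "x dvd a" "y dvd b"
  shows "coprime (x * y) (a * b div (x * y)) \<longleftrightarrow> coprime x (a div x) \<and> coprime y (b div y)"
proof -
  obtain u v where a: "a = x * u" and b: "b = y * v" using assms(2,3) by (elim dvdE)
  show ?thesis
  proof (cases "x = 0 \<or> y = 0")
    case True
    then show ?thesis using assms(1) unfolding a b by auto
  next
    case False
    have "coprime x v" "coprime y u" using assms(1) unfolding a b by (simp_all add: coprime_commute)
    then show ?thesis using False unfolding a b by (simp add: ac_simps)
  qed
qed

lemma unitary_divisors_mult:
  assumes "coprime (a::nat) b"
  shows "unitary_divisors (a * b) = (\<lambda>(x, y). x * y) ` (unitary_divisors a \<times> unitary_divisors b)"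
proof (intro equalityI subsetI)
  fix z assume "z \<in> (\<lambda>(x, y). x * y) ` (unitary_divisors a \<times> unitary_divisors b)"
  then obtain x y where "z = x * y" "x \<in> unitary_divisors a" "y \<in> unitary_divisors b"
    by auto
  then show "z \<in> unitary_divisors (a * b)"
    using coprime_mult_div_mult_iff[OF assms, of x y]
    by (simp add: unitary_divisors_def mult_dvd_mono)
next
  fix z assume "z \<in> unitary_divisors (a * b)"
  then obtain x y where "z = x * y" "x dvd a" "y dvd b" "coprime z (a * b div z)"
    using division_decomp[of z a b] by (auto simp: unitary_divisors_def)
  then show "z \<in> (\<lambda>(x, y). x * y) ` (unitary_divisors a \<times> unitary_divisors b)"
    using coprime_mult_div_mult_iff[OF assms, of x y]
    by (intro image_eqI[of _ _ "(x, y)"]) (simp_all add: unitary_divisors_def)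
qed

lemma card_divisors_mult:
  "coprime (a::nat) b \<Longrightarrow> card (divisors (a * b)) = card (divisors a) * card (divisors b)"
  by (simp add: divisors_mult card_image inj_on_mult_divisors card_cartesian_product)

lemma card_unitary_divisors_mult:
  assumes "coprime (a::nat) b"
  shows "card (unitary_divisors (a * b)) = card (unitary_divisors a) * card (unitary_divisors b)"
proof -
  have "inj_on (\<lambda>(x, y). x * y) (unitary_divisors a \<times> unitary_divisors b)"
    by (rule inj_on_subset[OF inj_on_mult_divisors[OF assms]])
       (auto simp: divisors_def unitary_divisors_def)
  then show ?thesis by (simp add: unitary_divisors_mult[OF assms] card_image card_cartesian_product)
qed

lemma card_divisors_prime_power:
  assumes p: "prime (p::nat)"
  shows "card (divisors (p ^ a)) = a + 1"
proof -
  have "divisors (p ^ a) = (\<lambda>i. p ^ i) ` {..a}"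
    using divides_primepow_nat[OF p] by (auto simp: divisors_def)
  moreover have "inj_on (\<lambda>i. p ^ i) {..a}"
    using prime_gt_1_nat[OF p] by (auto simp: inj_on_def)
  ultimately show ?thesis by (simp add: card_image)
qed

lemma unitary_divisors_prime_power:
  assumes "prime (p::nat)"
  shows "unitary_divisors (p ^ a) = {1, p ^ a}"
proof (intro equalityI subsetI)
  fix d assume "d \<in> unitary_divisors (p ^ a)"
  then have d: "d dvd p ^ a" "coprime d (p ^ a div d)" by (auto simp: unitary_divisors_def)
  then obtain i where i: "i \<le> a" "d = p ^ i" using divides_primepow_nat[OF assms] by blast
  then have "p ^ a div d = p ^ (a - i)" using prime_gt_0_nat[OF assms] by (simp add: power_diff)
  then have "i = 0 \<or> a - i = 0" using d(2) i(2) assms by auto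
  then show "d \<in> {1, p ^ a}" using i by auto
qed (use prime_gt_0_nat[OF assms] in \<open>auto simp: unitary_divisors_def\<close>)

lemma card_unitary_divisors_prime_power:
  assumes "prime (p::nat)" "0 < a"
  shows "card (unitary_divisors (p ^ a)) = 2"
proof -
  have "p ^ a \<noteq> 1" using assms prime_gt_1_nat[OF assms(1)] by simp
  then show ?thesis by (metis unitary_divisors_prime_power[OF assms(1)] card_2_iff)
qed

lemma multiplicative_prod_prime_powers:
  fixes g :: "nat \<Rightarrow> 'a::comm_monoid_mult"
  assumes mult: "\<And>a b. coprime a b \<Longrightarrow> g (a * b) = g a * g b" and one: "g 1 = 1"
    and I: "finite I" "inj_on p I" "\<forall>i\<in>I. prime (p i)"
  shows "g (\<Prod>i\<in>I. p i ^ f i) = (\<Prod>i\<in>I. g (p i ^ f i))"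
  using I
proof (induction I rule: finite_induct)
  case (insert i I)
  have "coprime (p i ^ f i) (\<Prod>j\<in>I. p j ^ f j)"
  proof (rule prod_coprime_right)
    fix j assume "j \<in> I"
    with insert.prems insert.hyps(2) have "p i \<noteq> p j" "prime (p i)" "prime (p j)"
      by (auto simp: inj_on_def)
    then show "coprime (p i ^ f i) (p j ^ f j)" by (simp add: primes_coprime)
  qed
  with insert show ?case by (simp add: mult)
qed (use one in simp)

lemma card_divisors_prod_prime_powers:
  assumes "finite I" "inj_on p I" "\<forall>i\<in>I. prime (p i)"
  shows "card (divisors (\<Prod>i\<in>I. p i ^ f i)) = (\<Prod>i\<in>I. f i + 1)"
proof -
  have "card (divisors (\<Prod>i\<in>I. p i ^ f i)) = (\<Prod>i\<in>I. card (divisors (p i ^ f i)))"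
  proof (rule multiplicative_prod_prime_powers[OF card_divisors_mult _ assms])
    have "divisors 1 = {1}" by (auto simp: divisors_def)
    then show "card (divisors 1) = 1" by simp
  qed
  also have "\<dots> = (\<Prod>i\<in>I. f i + 1)"
    using assms(3) by (intro prod.cong) (simp_all add: card_divisors_prime_power)
  finally show ?thesis .
qed

lemma card_unitary_divisors_prod_prime_powers:
  assumes "finite I" "inj_on p I" "\<forall>i\<in>I. prime (p i)" "\<forall>i\<in>I. 0 < f i"
  shows "card (unitary_divisors (\<Prod>i\<in>I. p i ^ f i)) = 2 ^ card I"
proof -
  have "unitary_divisors 1 = {1}" by (auto simp: unitary_divisors_def)
  then have "card (unitary_divisors (\<Prod>i\<in>I. p i ^ f i))
      = (\<Prod>i\<in>I. card (unitary_divisors (p i ^ f i)))"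
    using multiplicative_prod_prime_powers[OF card_unitary_divisors_mult _ assms(1-3)] by simp
  also have "\<dots> = (\<Prod>i\<in>I. 2)"
    using assms(3,4) by (intro prod.cong) (simp_all add: card_unitary_divisors_prime_power)
  finally show ?thesis by simp
qed

lemma one_less_prod_prime_powers:
  assumes "finite I" "I \<noteq> {}" "\<forall>i\<in>I. prime (p i) \<and> 0 < f i"
  shows "1 < (\<Prod>i\<in>I. p i ^ f i :: nat)"
proof -
  obtain i where i: "i \<in> I" using assms(2) by blast
  have "prime (p i)" "0 < f i" using assms(3) i by auto
  then have "1 < p i ^ f i" using prime_gt_1_nat one_less_power by blast
  also have "\<dots> \<le> (\<Prod>i\<in>I. p i ^ f i)"
    using assms(1,3) i prime_gt_0_nat by (intro dvd_imp_le dvd_prodI prod_pos) auto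
  finally show ?thesis .
qed

lemma udivprod_prod_prime_powers:
  assumes "finite I" "I \<noteq> {}" "inj_on p I" "\<forall>i\<in>I. prime (p i) \<and> 0 < f i"
    and n: "n = (\<Prod>i\<in>I. p i ^ f i)"
  shows "udivprod n = n ^ 2 ^ (card I - 1)"
proof -
  have "0 < n" using one_less_prod_prime_powers[OF assms(1,2,4)] n by simp
  have "card (unitary_divisors n) = 2 ^ card I"
    unfolding n using assms(4) by (intro card_unitary_divisors_prod_prime_powers[OF assms(1,3)]) auto
  moreover have "card I = Suc (card I - 1)" using assms(1,2) by (simp add: card_gt_0_iff)
  ultimately have "card (unitary_divisors n) = 2 ^ (card I - 1) * 2"
    by (metis power_Suc2)
  then have "udivprod n ^ 2 = (n ^ 2 ^ (card I - 1)) ^ 2"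
    using udivprod_squared[OF \<open>0 < n\<close>] by (simp only: power_mult)
  then show ?thesis by (rule power2_eq_imp_eq) simp_all
qed

lemma K_T0Tstar_perfect_prod_prime_powers_iff:
  assumes "finite I" "I \<noteq> {}" "inj_on p I" "\<forall>i\<in>I. prime (p i) \<and> 0 < f i"
  shows "K_T0Tstar_perfect K (\<Prod>i\<in>I. p i ^ f i) \<longleftrightarrow>
    2 \<le> K \<and> 2 ^ (card I - 1) * (\<Prod>i\<in>I. 2 ^ (card I - 1) * f i + 1) = 2 * K"
proof -
  define n where "n = (\<Prod>i\<in>I. p i ^ f i)"
  define e :: nat where "e = 2 ^ (card I - 1)"
  have n1: "1 < n" unfolding n_def using one_less_prod_prime_powers[OF assms(1,2)] assms(4) by simp
  have "n ^ e = (\<Prod>i\<in>I. p i ^ (e * f i))"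
    unfolding n_def prod_power_distrib by (simp add: power_mult[symmetric] mult.commute)
  then have "card (divisors (n ^ e)) = (\<Prod>i\<in>I. e * f i + 1)"
    using card_divisors_prod_prime_powers[OF assms(1,3)] assms(4) by simp
  then have D: "divprod (n ^ e) ^ 2 = n ^ (e * (\<Prod>i\<in>I. e * f i + 1))"
    using divprod_squared[of "n ^ e"] n1 by (simp add: power_mult)
  have "divprod (n ^ e) = n ^ K \<longleftrightarrow> divprod (n ^ e) ^ 2 = (n ^ K) ^ 2"
    using power_eq_iff_eq_base[of 2 "divprod (n ^ e)" "n ^ K"] by simp
  also have "\<dots> \<longleftrightarrow> n ^ (e * (\<Prod>i\<in>I. e * f i + 1)) = n ^ (2 * K)"
    by (simp only: D power_mult[symmetric] mult.commute[of K 2])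
  also have "\<dots> \<longleftrightarrow> e * (\<Prod>i\<in>I. e * f i + 1) = 2 * K"
    using n1 by (rule power_inject_exp)
  finally have "divprod (n ^ e) = n ^ K \<longleftrightarrow> e * (\<Prod>i\<in>I. e * f i + 1) = 2 * K" .
  moreover have "udivprod n = n ^ e"
    unfolding e_def by (rule udivprod_prod_prime_powers[OF assms n_def])
  ultimately show ?thesis
    unfolding K_T0Tstar_perfect_def n_def[symmetric] e_def using n1 by auto
qed

lemma prime_power_K_T0Tstar_perfect:
  assumes "prime p" "2 \<le> K"
  shows "K_T0Tstar_perfect K (p ^ (2 * K - 1))"
  using K_T0Tstar_perfect_prod_prime_powers_iff[of "{()}" "\<lambda>_. p" "\<lambda>_. 2 * K - 1" K] assms
  by simp

lemma prod_prime_powers_K_T0Tstar_perfect: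
  assumes I: "finite I" "2 \<le> card I" "inj_on p I" "\<forall>i\<in>I. prime (p i)"
    and d: "\<forall>i\<in>I. 1 < d i \<and> [d i = 1] (mod 2 ^ (card I - 1))"
  shows "K_T0Tstar_perfect (2 ^ (card I - 2) * (\<Prod>i\<in>I. d i))
           (\<Prod>i\<in>I. p i ^ ((d i - 1) div 2 ^ (card I - 1)))"
proof -
  define M :: nat where "M = 2 ^ (card I - 1)"
  define f where "f i = (d i - 1) div M" for i
  have d_eq: "M * f i + 1 = d i" if "i \<in> I" for i
  proof -
    have "1 < d i" "[d i = 1] (mod M)" using d that by (auto simp: M_def)
    then have "M dvd d i - 1" by (simp add: cong_altdef_nat)
    with \<open>1 < d i\<close> show ?thesis by (simp add: f_def)
  qed
  have f_pos: "0 < f i" if "i \<in> I" for i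
    using d_eq[OF that] d that by (cases "f i") auto
  have I_ne: "I \<noteq> {}" using I(2) by auto
  then obtain i where i: "i \<in> I" by blast
  have "2 \<le> d i" using d i by auto
  also have "\<dots> \<le> (\<Prod>i\<in>I. d i)"
    using I(1) d i by (intro dvd_imp_le dvd_prodI prod_pos) auto
  also have "\<dots> \<le> 2 ^ (card I - 2) * (\<Prod>i\<in>I. d i)"
    using one_le_power[of 2 "card I - 2"] by (metis mult_1 mult_le_mono1 one_le_numeral)
  finally have two_le: "2 \<le> 2 ^ (card I - 2) * (\<Prod>i\<in>I. d i)" .
  have "card I - 1 = Suc (card I - 2)" using I(2) by simp
  then have "M = 2 * 2 ^ (card I - 2)" unfolding M_def by simp
  moreover have "(\<Prod>i\<in>I. M * f i + 1) = (\<Prod>i\<in>I. d i)" by (rule prod.cong[OF refl d_eq])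
  ultimately have "M * (\<Prod>i\<in>I. M * f i + 1) = 2 * (2 ^ (card I - 2) * (\<Prod>i\<in>I. d i))"
    by simp
  then show ?thesis
    using K_T0Tstar_perfect_prod_prime_powers_iff[OF I(1) I_ne I(3), of f] I(4) f_pos two_le
    by (simp add: f_def M_def)
qed

lemma two_power_mult_odd_eqD:
  assumes "(2::nat) ^ a * x = 2 ^ b * y" "odd x" "odd y"
  shows "a = b \<and> x = y"
proof (cases a b rule: linorder_cases)
  case less
  then have "(2::nat) ^ b = 2 ^ a * 2 ^ (b - a)" by (simp flip: power_add)
  then have "x = 2 ^ (b - a) * y" using assms(1) by simp
  then show ?thesis using assms(2) less by simp
next
  case greater
  then have "(2::nat) ^ a = 2 ^ b * 2 ^ (a - b)" by (simp flip: power_add)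
  then have "y = 2 ^ (a - b) * x" using assms(1) by simp
  then show ?thesis using assms(3) greater by simp
qed (use assms(1) in simp)

lemma K_T0Tstar_perfect_cases:
  assumes "odd k" "K_T0Tstar_perfect (2 ^ m * k) n"
  shows "(\<exists>q. prime q \<and> n = q ^ (2 ^ (m + 1) * k - 1))
    \<or> (\<exists>d p. (\<forall>i<m+2. 1 < d i \<and> [d i = 1] (mod 2 ^ (m + 1))) \<and> (\<Prod>i<m+2. d i) = k \<and>
          (\<forall>i<m+2. prime (p i)) \<and> inj_on p {..<m+2} \<and>
          n = (\<Prod>i<m+2. p i ^ ((d i - 1) div 2 ^ (m + 1))))"
proof -
  have n1: "1 < n" using assms(2) by (simp add: K_T0Tstar_perfect_def)
  define s where "s = card (prime_factors n)"
  obtain p where p: "bij_betw p {..<s} (prime_factors n)"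
    using ex_bij_betw_nat_finite[of "prime_factors n"] by (auto simp: s_def atLeast0LessThan)
  define f where "f i = multiplicity (p i) n" for i
  have n: "n = (\<Prod>i<s. p i ^ f i)"
    using prime_factorization_nat[of n] n1 prod.reindex_bij_betw[OF p, of "\<lambda>q. q ^ multiplicity q n"]
    by (simp add: f_def)
  have p_f: "\<forall>i\<in>{..<s}. prime (p i) \<and> 0 < f i"
    using bij_betwE[OF p] by (auto simp: f_def prime_factors_multiplicity)
  have inj: "inj_on p {..<s}" using p by (simp add: bij_betw_def)
  have "s \<noteq> 0" using n n1 by (intro notI) simp
  then have "{..<s} \<noteq> {}" by auto
  then have E: "2 ^ (s - 1) * (\<Prod>i<s. 2 ^ (s - 1) * f i + 1) = 2 ^ (m + 1) * k"
    using K_T0Tstar_perfect_prod_prime_powers_iff[OF finite_lessThan _ inj p_f, of "2 ^ m * k"]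
      assms(2) n
    by (simp add: mult.assoc)
  consider "s = 1" | "2 \<le> s" using \<open>s \<noteq> 0\<close> by linarith
  then show ?thesis
  proof cases
    case 1
    then have "f 0 = 2 ^ (m + 1) * k - 1" using E by (simp; linarith)
    moreover have "n = p 0 ^ f 0" "prime (p 0)" using 1 n p_f by auto
    ultimately show ?thesis by auto
  next
    case 2
    have "odd (\<Prod>i<s. 2 ^ (s - 1) * f i + 1)" using 2 by (simp add: even_prod_iff)
    then have "s - 1 = m + 1" and k: "(\<Prod>i<s. 2 ^ (s - 1) * f i + 1) = k"
      using two_power_mult_odd_eqD[OF E _ assms(1)] by auto
    then have s: "s = m + 2" by simp
    define d where "d i = 2 ^ (m + 1) * f i + 1" for i
    have "[d i = 1] (mod 2 ^ (m + 1))" for i unfolding d_def cong_def by (rule mod_mult_self4)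
    moreover have "1 < d i" if "i < m + 2" for i using p_f that s by (simp add: d_def)
    moreover have "(\<Prod>i<m+2. d i) = k"
      unfolding d_def \<open>s - 1 = m + 1\<close>[symmetric] s[symmetric] by (rule k)
    moreover have "n = (\<Prod>i<m+2. p i ^ ((d i - 1) div 2 ^ (m + 1)))" using n s by (simp add: d_def)
    ultimately have "(\<forall>i<m+2. 1 < d i \<and> [d i = 1] (mod 2 ^ (m + 1))) \<and> (\<Prod>i<m+2. d i) = k \<and>
        (\<forall>i<m+2. prime (p i)) \<and> inj_on p {..<m+2} \<and>
        n = (\<Prod>i<m+2. p i ^ ((d i - 1) div 2 ^ (m + 1)))"
      using p_f inj s by auto
    then show ?thesis by blast
  qed
qed

theorem mainTheorem12:
  fixes k m :: nat
  assumes "odd k" and "0 < k" and "0 < m"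
  shows "(\<forall>p::nat. prime p \<longrightarrow> K_T0Tstar_perfect (2^m * k) (p ^ (2^(m+1) * k - 1)))
    \<and> (1 < k \<longrightarrow>
        (\<forall>d :: nat \<Rightarrow> nat.
           (\<forall>i<m+2. 1 < d i \<and> [d i = 1] (mod 2^(m+1))) \<and> (\<Prod>i<m+2. d i) = k \<longrightarrow>
           (\<forall>p :: nat \<Rightarrow> nat. (\<forall>i<m+2. prime (p i)) \<and> inj_on p {..<m+2} \<longrightarrow>
              K_T0Tstar_perfect (2^m * k) (\<Prod>i<m+2. p i ^ ((d i - 1) div 2^(m+1))))))
    \<and> (\<forall>n::nat. 1 < n \<and> K_T0Tstar_perfect (2^m * k) n \<longrightarrow>
        (\<exists>p::nat. prime p \<and> n = p ^ (2^(m+1) * k - 1))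
        \<or> (\<exists>(d :: nat \<Rightarrow> nat) (p :: nat \<Rightarrow> nat).
             (\<forall>i<m+2. 1 < d i \<and> [d i = 1] (mod 2^(m+1))) \<and> (\<Prod>i<m+2. d i) = k \<and>
             (\<forall>i<m+2. prime (p i)) \<and> inj_on p {..<m+2} \<and>
             n = (\<Prod>i<m+2. p i ^ ((d i - 1) div 2^(m+1)))))"
proof (intro conjI allI impI)
  fix p :: nat assume "prime p"
  have "2 ^ 1 * 1 \<le> (2::nat) ^ m * k" using assms(2,3) by (intro mult_le_mono power_increasing) auto
  then show "K_T0Tstar_perfect (2^m * k) (p ^ (2^(m+1) * k - 1))"
    using prime_power_K_T0Tstar_perfect[OF \<open>prime p\<close>, of "2 ^ m * k"] by (simp add: mult.assoc)
next
  fix d p :: "nat \<Rightarrow> nat"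
  assume "(\<forall>i<m+2. 1 < d i \<and> [d i = 1] (mod 2^(m+1))) \<and> (\<Prod>i<m+2. d i) = k"
    and "(\<forall>i<m+2. prime (p i)) \<and> inj_on p {..<m+2}"
  then show "K_T0Tstar_perfect (2^m * k) (\<Prod>i<m+2. p i ^ ((d i - 1) div 2^(m+1)))"
    using prod_prime_powers_K_T0Tstar_perfect[of "{..<m+2}" p d] by simp
qed (use K_T0Tstar_perfect_cases[OF assms(1)] in blast)

end
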